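(* Let $X$ be a Polish space and let $c:X\times X\to[0,\infty)$ be a continuous bounded function with $c(x,y)=c(y,x)$ for all $x,y\in X$. For $Q\in\mathcal M(X)$ define $K(Q):=\int_{X\times X}c(x,y)\,dQ(x)\,dQ(y)$. Then: (i) $c$ is positive definite if and only if $K$ is convex on $\mathcal M(X)$; (ii) $c$ is balanced positive definite if and only if $K$ is convex on $\mathcal P(X)$.
   Context: $\mathcal M(X)$ denotes the set of finite (nonnegative) Borel measures on $X$ and $\mathcal P(X)$ the set of Borel probability measures on $X$. A symmetric function $c:X\times X\to[0,\infty)$ is positive definite if for all $n$, all distinct points $x_1,\ldots,x_n\in X$ and all real numbers $a_1,\ldots,a_n$ one has $\sum_{i,j=1}^n c(x_i,x_j)a_ia_j\ge 0$. It is balanced positive definite if for all $n$, all distinct $x_1,\ldots,x_n\in X$ and all real $a_1,\ldots,a_n$ with $\sum_{i=1}^n a_i=0$ one has $\sum_{i,j=1}^n c(x_i,x_j)a_ia_j\ge0$. *)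

theory Defs
  imports "HOL-Probability.Probability"
begin

definition finite_borel_measures :: "'a::topological_space measure set" where
  "finite_borel_measures = {Q. sets Q = sets borel \<and> finite_measure Q}"

definition borel_prob_measures :: "'a::topological_space measure set" where
  "borel_prob_measures = {Q. sets Q = sets borel \<and> prob_space Q}"

definition mix_measure :: "real \<Rightarrow> 'a::topological_space measure \<Rightarrow> 'a measure \<Rightarrow> 'a measure" where
  "mix_measure t Q1 Q2 = measure_of UNIV (sets borel)
     (\<lambda>A. ennreal t * emeasure Q1 A + ennreal (1 - t) * emeasure Q2 A)"

definition energyK :: "('a::topological_space \<Rightarrow> 'a \<Rightarrow> real) \<Rightarrow> 'a measure \<Rightarrow> real" where
  "energyK c Q = integral\<^sup>L (Q \<Otimes>\<^sub>M Q) (\<lambda>(x, y). c x y)"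

definition convex_on_measures :: "'a::topological_space measure set \<Rightarrow> ('a measure \<Rightarrow> real) \<Rightarrow> bool" where
  "convex_on_measures S F \<longleftrightarrow>
     (\<forall>Q1\<in>S. \<forall>Q2\<in>S. \<forall>t::real. 0 \<le> t \<and> t \<le> 1 \<longrightarrow>
        F (mix_measure t Q1 Q2) \<le> t * F Q1 + (1 - t) * F Q2)"

definition pos_def_kernel :: "('a \<Rightarrow> 'a \<Rightarrow> real) \<Rightarrow> bool" where
  "pos_def_kernel c \<longleftrightarrow>
     (\<forall>(xs::'a list) (a::nat \<Rightarrow> real). distinct xs \<longrightarrow>
        (\<Sum>i<length xs. \<Sum>j<length xs. c (xs ! i) (xs ! j) * a i * a j) \<ge> 0)"

definition balanced_pos_def_kernel :: "('a \<Rightarrow> 'a \<Rightarrow> real) \<Rightarrow> bool" where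
  "balanced_pos_def_kernel c \<longleftrightarrow>
     (\<forall>(xs::'a list) (a::nat \<Rightarrow> real). distinct xs \<longrightarrow> (\<Sum>i<length xs. a i) = 0 \<longrightarrow>
        (\<Sum>i<length xs. \<Sum>j<length xs. c (xs ! i) (xs ! j) * a i * a j) \<ge> 0)"

end

theory Submission
  imports Defs
begin

text \<open>Write \<open>I(P, Q)\<close> for the cross energy \<open>\<integral>\<integral> c(x, y) dQ(y) dP(x)\<close> and
  \<open>E\<^sub>\<alpha>\<^sub>\<beta>(P, Q) = \<alpha>\<^sup>2 I(P, P) - \<alpha>\<beta> (I(P, Q) + I(Q, P)) + \<beta>\<^sup>2 I(Q, Q)\<close> for the energy of the
  signed measure \<open>\<alpha>P - \<beta>Q\<close>. Bilinearity gives
  \<open>K(tP + (1 - t)Q) = t K(P) + (1 - t) K(Q) - t(1 - t) E\<^sub>1\<^sub>1(P, Q)\<close>, so \<open>K\<close> is convex on a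
  convex set of measures iff \<open>E\<^sub>1\<^sub>1\<close> is nonnegative on it.

  For discrete measures \<open>E\<^sub>1\<^sub>1\<close> is the quadratic form of \<open>c\<close> at the difference of the weight
  vectors. Splitting an arbitrary (resp. zero-sum) weight vector into its positive and negative
  parts yields two finite (resp., after normalisation, probability) measures, so nonnegativity
  of the energy gives (balanced) positive definiteness.

  Conversely, draw \<open>n\<close> independent points from \<open>P\<close> with weight \<open>\<alpha>\<close> and \<open>n\<close> from \<open>Q\<close> with
  weight \<open>-\<beta>\<close>. The expected quadratic form is \<open>n\<^sup>2 E\<^sub>\<alpha>\<^sub>\<beta>(P, Q) + O(n)\<close>, the diagonal terms
  contributing only \<open>O(n)\<close>; hence positive definiteness forces \<open>E\<^sub>\<alpha>\<^sub>\<beta>(P, Q) \<ge> 0\<close>. A finite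
  measure is a nonnegative multiple of a probability measure, and for \<open>\<alpha> = \<beta> = 1\<close> the form
  is balanced.\<close>

section \<open>Finite weighted sums of Borel measures\<close>

lemma borel_measurable_sets_borel:
  assumes "sets N = sets borel" "f \<in> borel_measurable borel"
  shows "f \<in> borel_measurable N"
  using assms measurable_cong_sets[of N borel borel borel] by blast

lemma integrable_bounded:
  fixes f :: "'a \<Rightarrow> real"
  assumes "finite_measure N" "f \<in> borel_measurable N" "\<And>x. \<bar>f x\<bar> \<le> B"
  shows "integrable N f"
  using assms by (intro finite_measure.integrable_const_bound[where B=B]) auto

text \<open>Negative weights are truncated to \<open>0\<close> by \<open>ennreal\<close>.\<close>

definition weighted_sum_measure ::
  "'i set \<Rightarrow> ('i \<Rightarrow> real) \<Rightarrow> ('i \<Rightarrow> 'a::topological_space measure) \<Rightarrow> 'a measure" where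
  "weighted_sum_measure I w M =
     measure_of UNIV (sets borel) (\<lambda>A. \<Sum>i\<in>I. ennreal (w i) * emeasure (M i) A)"

lemma sets_weighted_sum_measure [simp, measurable_cong]:
  "sets (weighted_sum_measure I w M) = sets borel"
  using sets.sigma_sets_eq[of borel] by (simp add: weighted_sum_measure_def)

lemma space_weighted_sum_measure [simp]: "space (weighted_sum_measure I w M) = UNIV"
  by (simp add: weighted_sum_measure_def)

lemma emeasure_weighted_sum_measure:
  fixes M :: "'i \<Rightarrow> 'a::topological_space measure"
  assumes M: "\<And>i. i \<in> I \<Longrightarrow> sets (M i) = sets borel" and A: "A \<in> sets borel"
  shows "emeasure (weighted_sum_measure I w M) A = (\<Sum>i\<in>I. ennreal (w i) * emeasure (M i) A)"
  unfolding weighted_sum_measure_def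
proof (rule emeasure_measure_of_sigma)
  show "sigma_algebra UNIV (sets borel)"
    by (metis sets.sigma_algebra_axioms space_borel)
  show "positive (sets borel) (\<lambda>A. \<Sum>i\<in>I. ennreal (w i) * emeasure (M i) A)"
    by (simp add: positive_def)
  show "countably_additive (sets borel) (\<lambda>A. \<Sum>i\<in>I. ennreal (w i) * emeasure (M i) A)"
  proof (rule countably_additiveI)
    fix A :: "nat \<Rightarrow> 'a set"
    assume A: "range A \<subseteq> sets borel" "disjoint_family A"
    have "(\<Sum>k. \<Sum>i\<in>I. ennreal (w i) * emeasure (M i) (A k))
        = (\<Sum>i\<in>I. \<Sum>k. ennreal (w i) * emeasure (M i) (A k))"
      by (rule suminf_sum) simp
    also have "\<dots> = (\<Sum>i\<in>I. ennreal (w i) * (\<Sum>k. emeasure (M i) (A k)))"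
      by simp
    also have "\<dots> = (\<Sum>i\<in>I. ennreal (w i) * emeasure (M i) (\<Union>k. A k))"
      using A M by (intro sum.cong refl) (simp add: suminf_emeasure)
    finally show "(\<Sum>k. \<Sum>i\<in>I. ennreal (w i) * emeasure (M i) (A k))
        = (\<Sum>i\<in>I. ennreal (w i) * emeasure (M i) (\<Union>k. A k))" .
  qed
qed (fact A)

lemma finite_measure_weighted_sum_measure:
  fixes M :: "'i \<Rightarrow> 'a::topological_space measure"
  assumes M: "\<And>i. i \<in> I \<Longrightarrow> sets (M i) = sets borel" "\<And>i. i \<in> I \<Longrightarrow> finite_measure (M i)"
    and fin: "finite I"
  shows "finite_measure (weighted_sum_measure I w M)"
proof (rule finite_measureI)
  have "emeasure (M i) UNIV \<noteq> top" if "i \<in> I" for i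
    using M(2)[OF that] by (rule finite_measure.emeasure_finite)
  then show "emeasure (weighted_sum_measure I w M) (space (weighted_sum_measure I w M)) \<noteq> \<infinity>"
    using M(1) fin by (simp add: emeasure_weighted_sum_measure ennreal_mult_eq_top_iff)
qed

lemma nn_integral_weighted_sum_measure:
  fixes M :: "'i \<Rightarrow> 'a::topological_space measure"
  assumes M: "\<And>i. i \<in> I \<Longrightarrow> sets (M i) = sets borel" and fin: "finite I"
    and f: "f \<in> borel_measurable borel"
  shows "(\<integral>\<^sup>+x. f x \<partial>weighted_sum_measure I w M) = (\<Sum>i\<in>I. ennreal (w i) * (\<integral>\<^sup>+x. f x \<partial>M i))"
  using f
proof induction
  case (cong f g)
  then have "f = g" by (intro ext) simp
  then show ?case using cong.IH by simp
next
  case (set A)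
  then show ?case using M by (simp add: emeasure_weighted_sum_measure)
next
  case (mult f c)
  have cmult: "(\<integral>\<^sup>+x. c * f x \<partial>N) = c * (\<integral>\<^sup>+x. f x \<partial>N)" if "sets N = sets borel" for N
    by (rule nn_integral_cmult[OF borel_measurable_sets_borel[OF that mult.hyps(2)]])
  have "(\<Sum>i\<in>I. ennreal (w i) * (\<integral>\<^sup>+x. c * f x \<partial>M i)) = (\<Sum>i\<in>I. c * (ennreal (w i) * (\<integral>\<^sup>+x. f x \<partial>M i)))"
    using M by (intro sum.cong refl) (simp only: cmult mult.left_commute)
  then show ?case
    using mult.IH by (simp add: cmult sum_distrib_left)
next
  case (add g f)
  have add: "(\<integral>\<^sup>+x. f x + g x \<partial>N) = (\<integral>\<^sup>+x. f x \<partial>N) + (\<integral>\<^sup>+x. g x \<partial>N)"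
    if "sets N = sets borel" for N
    using borel_measurable_sets_borel[OF that] add.hyps(1,3) by (intro nn_integral_add) auto
  have "(\<Sum>i\<in>I. ennreal (w i) * (\<integral>\<^sup>+x. f x + g x \<partial>M i))
      = (\<Sum>i\<in>I. ennreal (w i) * (\<integral>\<^sup>+x. f x \<partial>M i)) + (\<Sum>i\<in>I. ennreal (w i) * (\<integral>\<^sup>+x. g x \<partial>M i))"
    using M by (simp only: add distrib_left sum.distrib cong: sum.cong)
  then show ?case
    using add.IH by (simp add: add)
next
  case (seq U)
  have SUP_nn_integral: "(\<integral>\<^sup>+x. (SUP k. U k x) \<partial>N) = (SUP k. \<integral>\<^sup>+x. U k x \<partial>N)"
    if "sets N = sets borel" for N :: "'a measure"
    by (rule nn_integral_monotone_convergence_SUP[OF seq.hyps(3) borel_measurable_sets_borel[OF that seq.hyps(1)]])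
  have "(\<integral>\<^sup>+x. (SUP k. U k x) \<partial>weighted_sum_measure I w M)
      = (SUP k. \<Sum>i\<in>I. ennreal (w i) * (\<integral>\<^sup>+x. U k x \<partial>M i))"
    using seq.IH by (simp add: SUP_nn_integral)
  also have "\<dots> = (\<Sum>i\<in>I. SUP k. ennreal (w i) * (\<integral>\<^sup>+x. U k x \<partial>M i))"
  proof (rule ennreal_SUP_sum)
    show "incseq (\<lambda>k. ennreal (w i) * (\<integral>\<^sup>+x. U k x \<partial>M i))" for i
      using seq.hyps(3) unfolding incseq_def le_fun_def
      by (intro allI impI mult_left_mono nn_integral_mono) simp_all
  qed
  also have "\<dots> = (\<Sum>i\<in>I. ennreal (w i) * (\<integral>\<^sup>+x. (SUP k. U k x) \<partial>M i))"
    using M by (intro sum.cong refl) (simp add: SUP_nn_integral SUP_mult_left_ennreal)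
  finally show ?case
    unfolding SUP_apply .
qed

lemma integral_weighted_sum_measure_nonneg:
  fixes M :: "'i \<Rightarrow> 'a::topological_space measure" and f :: "'a \<Rightarrow> real"
  assumes M: "\<And>i. i \<in> I \<Longrightarrow> sets (M i) = sets borel" "\<And>i. i \<in> I \<Longrightarrow> finite_measure (M i)"
    and fin: "finite I" and w: "\<And>i. i \<in> I \<Longrightarrow> 0 \<le> w i"
    and f: "f \<in> borel_measurable borel" "\<And>x. 0 \<le> f x" "\<And>x. f x \<le> B"
  shows "integral\<^sup>L (weighted_sum_measure I w M) f = (\<Sum>i\<in>I. w i * integral\<^sup>L (M i) f)"
proof -
  have nn_integral_eq: "(\<integral>\<^sup>+x. f x \<partial>N) = ennreal (integral\<^sup>L N f)"
    if "sets N = sets borel" "finite_measure N" for N :: "'a measure"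
    using f borel_measurable_sets_borel[OF that(1) f(1)]
    by (intro nn_integral_eq_integral integrable_bounded[OF that(2), where B=B]) auto
  have int_nonneg: "0 \<le> integral\<^sup>L (M i) f" for i
    using f(2) by (rule Bochner_Integration.integral_nonneg)
  have "ennreal (integral\<^sup>L (weighted_sum_measure I w M) f)
      = (\<Sum>i\<in>I. ennreal (w i) * (\<integral>\<^sup>+x. f x \<partial>M i))"
  proof -
    have "ennreal (integral\<^sup>L (weighted_sum_measure I w M) f) = (\<integral>\<^sup>+x. f x \<partial>weighted_sum_measure I w M)"
      by (rule nn_integral_eq[symmetric]) (simp_all add: finite_measure_weighted_sum_measure[OF M fin])
    also have "\<dots> = (\<Sum>i\<in>I. ennreal (w i) * (\<integral>\<^sup>+x. f x \<partial>M i))"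
      using f(1) by (intro nn_integral_weighted_sum_measure[OF M(1) fin]) measurable
    finally show ?thesis .
  qed
  also have "\<dots> = (\<Sum>i\<in>I. ennreal (w i * integral\<^sup>L (M i) f))"
    using M w int_nonneg by (intro sum.cong refl) (simp only: nn_integral_eq ennreal_mult')
  also have "\<dots> = ennreal (\<Sum>i\<in>I. w i * integral\<^sup>L (M i) f)"
    using w int_nonneg by (intro sum_ennreal) simp
  finally show ?thesis
    using w int_nonneg f(2) by (simp add: sum_nonneg Bochner_Integration.integral_nonneg)
qed

lemma integral_weighted_sum_measure:
  fixes M :: "'i \<Rightarrow> 'a::topological_space measure" and f :: "'a \<Rightarrow> real"
  assumes M: "\<And>i. i \<in> I \<Longrightarrow> sets (M i) = sets borel" "\<And>i. i \<in> I \<Longrightarrow> finite_measure (M i)"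
    and fin: "finite I" and w: "\<And>i. i \<in> I \<Longrightarrow> 0 \<le> w i"
    and f: "f \<in> borel_measurable borel" "\<And>x. \<bar>f x\<bar> \<le> B"
  shows "integral\<^sup>L (weighted_sum_measure I w M) f = (\<Sum>i\<in>I. w i * integral\<^sup>L (M i) f)"
proof -
  let ?pos = "\<lambda>x. max 0 (f x)" and ?neg = "\<lambda>x. max 0 (- f x)"
  have "0 \<le> B"
    using f(2) abs_ge_zero order_trans by blast
  then have parts: "?pos \<in> borel_measurable borel" "?neg \<in> borel_measurable borel"
    "\<And>x. ?pos x \<le> B" "\<And>x. ?neg x \<le> B"
    using f by (auto simp: abs_le_iff)
  have pos_neg_split: "integral\<^sup>L N f = integral\<^sup>L N ?pos - integral\<^sup>L N ?neg"
    if "sets N = sets borel" "finite_measure N" for N :: "'a measure"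
  proof -
    have "integral\<^sup>L N f = integral\<^sup>L N (\<lambda>x. ?pos x - ?neg x)"
      by (intro Bochner_Integration.integral_cong) auto
    also have "\<dots> = integral\<^sup>L N ?pos - integral\<^sup>L N ?neg"
      using parts by (intro Bochner_Integration.integral_diff integrable_bounded[OF that(2), where B=B]
          borel_measurable_sets_borel[OF that(1)]) auto
    finally show ?thesis .
  qed
  have "integral\<^sup>L (weighted_sum_measure I w M) f
      = (\<Sum>i\<in>I. w i * integral\<^sup>L (M i) ?pos) - (\<Sum>i\<in>I. w i * integral\<^sup>L (M i) ?neg)"
    using pos_neg_split[OF sets_weighted_sum_measure finite_measure_weighted_sum_measure[OF M fin]]
      integral_weighted_sum_measure_nonneg[OF M fin w parts(1) _ parts(3)]
      integral_weighted_sum_measure_nonneg[OF M fin w parts(2) _ parts(4)]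
    by simp
  also have "\<dots> = (\<Sum>i\<in>I. w i * integral\<^sup>L (M i) f)"
    using pos_neg_split[OF M] by (simp add: right_diff_distrib sum_subtractf)
  finally show ?thesis .
qed

lemma finite_measure_scaled_prob_space:
  fixes P :: "'a::topological_space measure"
  assumes P: "sets P = sets borel" "finite_measure P"
  obtains P' :: "'a measure" and p :: real
  where "prob_space P'" "sets P' = sets borel" "0 \<le> p"
    "P = weighted_sum_measure {()} (\<lambda>_. p) (\<lambda>_. P')"
proof (cases "emeasure P (space P) = 0")
  case True
  have "P = weighted_sum_measure {()} (\<lambda>_. 0) (\<lambda>_. return borel undefined)"
  proof (rule measure_eqI)
    fix A
    assume "A \<in> sets P"
    have "emeasure P A = 0"
      using True emeasure_space[of P A] by simp
    then show "emeasure P A = emeasure (weighted_sum_measure {()} (\<lambda>_. 0) (\<lambda>_. return borel undefined)) A"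
      using \<open>A \<in> sets P\<close> P(1) by (simp add: emeasure_weighted_sum_measure)
  qed (simp add: P)
  then show ?thesis
    by (intro that) (simp_all add: prob_space_return)
next
  case False
  interpret finite_measure P by fact
  define p where "p = measure P (space P)"
  have p: "0 < p"
    using False by (simp add: p_def emeasure_eq_measure zero_less_measure_iff)
  have space_P: "space P = UNIV"
    using sets_eq_imp_space_eq[OF P(1)] by simp
  define P' where "P' = weighted_sum_measure {()} (\<lambda>_. 1 / p) (\<lambda>_. P)"
  have "emeasure P' (space P') = ennreal (1 / p) * ennreal p"
    using P(1) by (simp add: P'_def emeasure_weighted_sum_measure emeasure_eq_measure p_def space_P)
  also have "\<dots> = 1"
    using p by (simp flip: ennreal_mult)
  finally have "prob_space P'"
    by (rule prob_spaceI)
  moreover have "sets P' = sets borel"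
    by (simp add: P'_def)
  moreover have "P = weighted_sum_measure {()} (\<lambda>_. p) (\<lambda>_. P')"
  proof (rule measure_eqI)
    fix A
    assume "A \<in> sets P"
    then have "emeasure (weighted_sum_measure {()} (\<lambda>_. p) (\<lambda>_. P')) A
        = ennreal p * (ennreal (1 / p) * emeasure P A)"
      using P(1) by (simp add: P'_def emeasure_weighted_sum_measure)
    also have "\<dots> = ennreal (p * (1 / p)) * emeasure P A"
      using p by (subst ennreal_mult) (simp_all add: mult.assoc)
    also have "\<dots> = emeasure P A"
      using p by simp
    finally show "emeasure P A = emeasure (weighted_sum_measure {()} (\<lambda>_. p) (\<lambda>_. P')) A" ..
  qed (simp add: P)
  ultimately show ?thesis
    using p by (intro that) simp_all
qed

section \<open>Independent sampling\<close>

lemma measurable_PiM_apply_pair: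
  fixes M :: "'i \<Rightarrow> 'a::topological_space measure" and f :: "'a \<Rightarrow> 'a \<Rightarrow> real"
  assumes M: "\<And>i. sets (M i) = sets borel" and ij: "i \<in> I" "j \<in> I"
    and f: "(\<lambda>(x, y). f x y) \<in> borel_measurable (borel \<Otimes>\<^sub>M borel)"
  shows "(\<lambda>\<omega>. f (\<omega> i) (\<omega> j)) \<in> borel_measurable (PiM I M)"
proof -
  have "(\<lambda>\<omega>. \<omega> k) \<in> measurable (PiM I M) borel" if "k \<in> I" for k
    using measurable_component_singleton[OF that, of M] M[of k] measurable_cong_sets by blast
  then have "(\<lambda>\<omega>. (\<omega> i, \<omega> j)) \<in> measurable (PiM I M) (borel \<Otimes>\<^sub>M borel)"
    using ij by (intro measurable_Pair)
  from measurable_compose[OF this f] show ?thesis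
    by simp
qed

lemma integral_PiM_pair:
  fixes M :: "'i \<Rightarrow> 'a::topological_space measure" and f :: "'a \<Rightarrow> 'a \<Rightarrow> real"
  assumes M: "\<And>i. prob_space (M i)" "\<And>i. sets (M i) = sets borel" and fin: "finite I"
    and ij: "i \<in> I" "j \<in> I" "i \<noteq> j"
    and f: "(\<lambda>(x, y). f x y) \<in> borel_measurable (borel \<Otimes>\<^sub>M borel)" and bnd: "\<And>x y. \<bar>f x y\<bar> \<le> B"
  shows "(\<integral>\<omega>. f (\<omega> i) (\<omega> j) \<partial>PiM I M) = (\<integral>x. (\<integral>y. f x y \<partial>M j) \<partial>M i)"
proof -
  interpret product_prob_space M I
    by (simp add: M(1) product_prob_space.intro product_prob_space_axioms.intro
        product_sigma_finite.intro prob_space_imp_sigma_finite)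
  let ?J = "{j, i}"
  have J: "finite ?J" "?J \<subseteq> I"
    using ij by auto
  have f_J: "(\<lambda>\<omega>. f (\<omega> i) (\<omega> j)) \<in> borel_measurable (PiM ?J M)"
    by (rule measurable_PiM_apply_pair[OF M(2) _ _ f]) simp_all
  have "finite_measure (PiM ?J M)"
    using prob_space_PiM[of ?J M] M(1) prob_space_def by blast
  then have int_J: "integrable (PiM ?J M) (\<lambda>\<omega>. f (\<omega> i) (\<omega> j))"
    by (rule integrable_bounded[OF _ f_J bnd])
  have inner: "(\<lambda>x. \<integral>y. f x y \<partial>M j) \<in> borel_measurable (M i)"
  proof (rule sigma_finite_measure.borel_measurable_lebesgue_integral[OF prob_space_imp_sigma_finite[OF M(1)]])
    show "(\<lambda>(x, y). f x y) \<in> borel_measurable (M i \<Otimes>\<^sub>M M j)"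
      using f measurable_cong_sets[OF sets_pair_measure_cong[OF M(2) M(2)] refl] by blast
  qed
  have "(\<integral>\<omega>. f (\<omega> i) (\<omega> j) \<partial>PiM I M) = (\<integral>\<omega>. f (restrict \<omega> ?J i) (restrict \<omega> ?J j) \<partial>PiM I M)"
    by simp
  also have "\<dots> = (\<integral>\<omega>. f (\<omega> i) (\<omega> j) \<partial>distr (PiM I M) (PiM ?J M) (\<lambda>\<omega>. restrict \<omega> ?J))"
    by (rule integral_distr[symmetric, OF measurable_restrict_subset[OF J(2)] f_J])
  also have "\<dots> = (\<integral>\<omega>. f (\<omega> i) (\<omega> j) \<partial>PiM (insert j {i}) M)"
    using distr_PiM_restrict_finite[OF J] by simp
  also have "\<dots> = (\<integral>x. (\<integral>y. f ((x(j := y)) i) ((x(j := y)) j) \<partial>M j) \<partial>PiM {i} M)"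
    using ij int_J by (intro product_integral_insert) auto
  also have "\<dots> = (\<integral>x. (\<integral>y. f (x i) y \<partial>M j) \<partial>PiM {i} M)"
    using ij by simp
  also have "\<dots> = (\<integral>x. (\<integral>y. f x y \<partial>M j) \<partial>M i)"
    by (rule product_integral_singleton[OF inner])
  finally show ?thesis .
qed

lemma integral_PiM_diagonal:
  fixes M :: "'i \<Rightarrow> 'a::topological_space measure" and f :: "'a \<Rightarrow> 'a \<Rightarrow> real"
  assumes M: "\<And>i. prob_space (M i)" "\<And>i. sets (M i) = sets borel" and i: "i \<in> I"
    and f: "(\<lambda>(x, y). f x y) \<in> borel_measurable (borel \<Otimes>\<^sub>M borel)"
  shows "(\<integral>\<omega>. f (\<omega> i) (\<omega> i) \<partial>PiM I M) = (\<integral>x. f x x \<partial>M i)"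
proof -
  have "(\<lambda>x. (x, x)) \<in> measurable borel (borel \<Otimes>\<^sub>M borel)"
    by (intro measurable_Pair) auto
  from measurable_compose[OF this f] have "(\<lambda>x. f x x) \<in> borel_measurable (M i)"
    using borel_measurable_sets_borel[OF M(2)] by simp
  then have "(\<integral>x. f x x \<partial>distr (PiM I M) (M i) (\<lambda>\<omega>. \<omega> i)) = (\<integral>\<omega>. f (\<omega> i) (\<omega> i) \<partial>PiM I M)"
    using i by (intro integral_distr) auto
  then show ?thesis
    using distr_PiM_component[of I M i] M(1) i by simp
qed

lemma nonneg_of_quadratic_growth:
  fixes X C :: real
  assumes "\<And>n::nat. 0 < n \<Longrightarrow> 0 \<le> real n * real n * X + real n * C"
  shows "0 \<le> X"
proof (rule ccontr)
  assume "\<not> 0 \<le> X"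
  then have X: "0 < - X" by simp
  obtain n :: nat where n: "\<bar>C\<bar> / (- X) < real n"
    using reals_Archimedean2 by blast
  have "0 \<le> \<bar>C\<bar> / (- X)"
    by (rule divide_nonneg_pos[OF abs_ge_zero X])
  with n have "0 < n"
    by simp
  have "\<bar>C\<bar> < real n * (- X)"
    using n by (subst (asm) pos_divide_less_eq[OF X])
  then have "real n * X + C < 0"
    by linarith
  with \<open>0 < n\<close> have "real n * (real n * X + C) < 0"
    by (simp add: mult_pos_neg)
  with assms[OF \<open>0 < n\<close>] show False
    by (simp add: algebra_simps)
qed

lemma sum_lessThan_add: "(\<Sum>i<n + m. f i) = (\<Sum>i<n. f i) + (\<Sum>i<m. f (n + i))"
  for f :: "nat \<Rightarrow> 'b::comm_monoid_add"
  by (induction m) (simp_all add: add.assoc)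

section \<open>Quadratic forms of a kernel and discrete measures\<close>

definition kernel_quadratic_form :: "('a \<Rightarrow> 'a \<Rightarrow> real) \<Rightarrow> 'a list \<Rightarrow> (nat \<Rightarrow> real) \<Rightarrow> real" where
  "kernel_quadratic_form c xs a = (\<Sum>i<length xs. \<Sum>j<length xs. c (xs ! i) (xs ! j) * a i * a j)"

lemma kernel_quadratic_form_scale:
  "kernel_quadratic_form c xs (\<lambda>i. r * a i) = r\<^sup>2 * kernel_quadratic_form c xs a"
  by (simp add: kernel_quadratic_form_def sum_distrib_left power2_eq_square mult_ac)

definition remdups_weights :: "'a list \<Rightarrow> (nat \<Rightarrow> real) \<Rightarrow> nat \<Rightarrow> real" where
  "remdups_weights xs a k = (\<Sum>i | i < length xs \<and> xs ! i = remdups xs ! k. a i)"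

lemma sum_nth_remdups:
  fixes F :: "'a \<Rightarrow> real"
  shows "(\<Sum>i<length xs. F (xs ! i) * a i)
    = (\<Sum>k<length (remdups xs). F (remdups xs ! k) * remdups_weights xs a k)"
proof -
  have "(\<Sum>i<length xs. F (xs ! i) * a i) = (\<Sum>y\<in>set xs. \<Sum>i \<in> {i \<in> {..<length xs}. xs ! i = y}. F (xs ! i) * a i)"
    by (rule sum.group[symmetric]) (auto simp: set_conv_nth)
  also have "\<dots> = (\<Sum>y\<in>set xs. F y * (\<Sum>i | i < length xs \<and> xs ! i = y. a i))"
    by (simp add: sum_distrib_left)
  also have "\<dots> = (\<Sum>k<length (remdups xs). F (remdups xs ! k) * remdups_weights xs a k)"
    unfolding remdups_weights_def
    by (rule sum.reindex_bij_betw[symmetric]) (rule bij_betw_nth; simp)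
  finally show ?thesis .
qed

lemma sum_remdups_weights:
  "(\<Sum>k<length (remdups xs). remdups_weights xs a k) = (\<Sum>i<length xs. a i)"
  using sum_nth_remdups[of "\<lambda>_. 1" xs a] by simp

lemma kernel_quadratic_form_remdups:
  "kernel_quadratic_form c xs a = kernel_quadratic_form c (remdups xs) (remdups_weights xs a)"
proof -
  let ?ys = "remdups xs" and ?b = "remdups_weights xs a"
  have "kernel_quadratic_form c xs a = (\<Sum>i<length xs. (\<Sum>j<length xs. c (xs ! i) (xs ! j) * a j) * a i)"
    by (simp add: kernel_quadratic_form_def sum_distrib_left sum_distrib_right mult_ac)
  also have "\<dots> = (\<Sum>i<length xs. (\<Sum>l<length ?ys. c (xs ! i) (?ys ! l) * ?b l) * a i)"
    by (intro sum.cong refl arg_cong[where f="\<lambda>s. s * a i" for i] sum_nth_remdups)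
  also have "\<dots> = (\<Sum>k<length ?ys. (\<Sum>l<length ?ys. c (?ys ! k) (?ys ! l) * ?b l) * ?b k)"
    by (rule sum_nth_remdups)
  also have "\<dots> = kernel_quadratic_form c ?ys ?b"
    by (simp add: kernel_quadratic_form_def sum_distrib_left sum_distrib_right mult_ac)
  finally show ?thesis .
qed

text \<open>Positive definiteness is only required for distinct points, but repeated points
  can be merged by adding up their weights.\<close>

lemma pos_def_kernel_quadratic_form_nonneg:
  assumes "pos_def_kernel c"
  shows "0 \<le> kernel_quadratic_form c xs a"
  using assms unfolding pos_def_kernel_def kernel_quadratic_form_remdups[of c xs]
  by (simp add: kernel_quadratic_form_def)

lemma balanced_pos_def_kernel_quadratic_form_nonneg:
  assumes "balanced_pos_def_kernel c" "(\<Sum>i<length xs. a i) = 0"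
  shows "0 \<le> kernel_quadratic_form c xs a"
  using assms unfolding balanced_pos_def_kernel_def kernel_quadratic_form_remdups[of c xs]
  by (simp add: kernel_quadratic_form_def sum_remdups_weights)

lemma sum_negative_part_eq_sum_positive_part:
  fixes a :: "nat \<Rightarrow> real"
  assumes "(\<Sum>i<n. a i) = 0"
  shows "(\<Sum>i<n. max (- a i) 0) = (\<Sum>i<n. max (a i) 0)"
proof -
  have "(\<Sum>i<n. max (- a i) 0) = (\<Sum>i<n. max (a i) 0 - a i)"
    by (intro sum.cong) (auto simp: max_def)
  then show ?thesis
    using assms by (simp add: sum_subtractf)
qed

lemma zero_if_sum_positive_part_eq_0:
  fixes a :: "nat \<Rightarrow> real"
  assumes "(\<Sum>i<n. a i) = 0" "(\<Sum>i<n. max (a i) 0) = 0" "i < n"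
  shows "a i = 0"
proof -
  have "(\<Sum>i<n. max (- a i) 0) = 0"
    using sum_negative_part_eq_sum_positive_part[OF assms(1)] assms(2) by simp
  then have "max (a i) 0 = 0" "max (- a i) 0 = 0"
    using assms(2,3) sum_nonneg_eq_0_iff[of "{..<n}" "\<lambda>i. max (a i) 0"]
      sum_nonneg_eq_0_iff[of "{..<n}" "\<lambda>i. max (- a i) 0"] by auto
  then show ?thesis
    by (simp add: max_def split: if_splits)
qed

definition discrete_measure :: "'a::topological_space list \<Rightarrow> (nat \<Rightarrow> real) \<Rightarrow> 'a measure" where
  "discrete_measure xs w = weighted_sum_measure {..<length xs} w (\<lambda>i. return borel (xs ! i))"

lemma sets_discrete_measure [simp]: "sets (discrete_measure xs w) = sets borel"
  by (simp add: discrete_measure_def)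

lemma finite_measure_discrete_measure: "finite_measure (discrete_measure xs w)"
  unfolding discrete_measure_def
  by (rule finite_measure_weighted_sum_measure) (simp_all add: prob_space_return prob_space.finite_measure)

lemma prob_space_discrete_measure:
  assumes "\<And>i. 0 \<le> w i" "(\<Sum>i<length xs. w i) = 1"
  shows "prob_space (discrete_measure xs w)"
proof (rule prob_spaceI)
  have "emeasure (discrete_measure xs w) (space (discrete_measure xs w)) = (\<Sum>i<length xs. ennreal (w i))"
    by (simp add: discrete_measure_def emeasure_weighted_sum_measure)
  also have "\<dots> = 1"
    using assms by (simp add: sum_ennreal)
  finally show "emeasure (discrete_measure xs w) (space (discrete_measure xs w)) = 1" .
qed

section \<open>Energies of a bounded kernel\<close>

locale bounded_kernel =
  fixes c :: "'a::topological_space \<Rightarrow> 'a \<Rightarrow> real" and B :: real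
  assumes measurable_kernel: "(\<lambda>(x, y). c x y) \<in> borel_measurable (borel \<Otimes>\<^sub>M borel)"
    and abs_kernel_le: "\<And>x y. \<bar>c x y\<bar> \<le> B"
begin

definition potential :: "'a measure \<Rightarrow> 'a \<Rightarrow> real" where
  "potential S x = (\<integral>y. c x y \<partial>S)"

definition cross_energy :: "'a measure \<Rightarrow> 'a measure \<Rightarrow> real" where
  "cross_energy R S = integral\<^sup>L R (potential S)"

definition diagonal_energy :: "'a measure \<Rightarrow> real" where
  "diagonal_energy R = (\<integral>x. c x x \<partial>R)"

definition energy_of_difference :: "real \<Rightarrow> 'a measure \<Rightarrow> real \<Rightarrow> 'a measure \<Rightarrow> real" where
  "energy_of_difference \<alpha> P \<beta> Q =
     \<alpha>\<^sup>2 * cross_energy P P - \<alpha> * \<beta> * (cross_energy P Q + cross_energy Q P) + \<beta>\<^sup>2 * cross_energy Q Q"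

lemma measurable_kernel_on:
  assumes "sets R = sets borel" "sets S = sets borel"
  shows "(\<lambda>(x, y). c x y) \<in> borel_measurable (R \<Otimes>\<^sub>M S)"
  using measurable_kernel measurable_cong_sets[OF sets_pair_measure_cong[OF assms] refl] by blast

lemma measurable_kernel_left: "(\<lambda>x. c x y) \<in> borel_measurable borel"
  using measurable_Pair1[OF measurable_kernel, of y] by simp

lemma measurable_kernel_right: "(\<lambda>y. c x y) \<in> borel_measurable borel"
  using measurable_Pair2[OF measurable_kernel, of x] by simp

lemma borel_measurable_potential:
  assumes "sets S = sets borel" "finite_measure S"
  shows "potential S \<in> borel_measurable borel"
proof -
  interpret finite_measure S by fact
  show ?thesis
    unfolding potential_def by (rule borel_measurable_lebesgue_integral[OF measurable_kernel_on[OF refl assms(1)]])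
qed

lemma abs_potential_le:
  assumes S: "sets S = sets borel" "finite_measure S"
  shows "\<bar>potential S x\<bar> \<le> B * measure S UNIV"
proof -
  interpret finite_measure S by fact
  have "integrable S (\<lambda>y. c x y)"
    by (rule integrable_bounded[OF S(2) borel_measurable_sets_borel[OF S(1) measurable_kernel_right] abs_kernel_le])
  then have "\<bar>potential S x\<bar> \<le> (\<integral>y. B \<partial>S)"
    unfolding potential_def using abs_kernel_le
    by (intro order_trans[OF integral_abs_bound] integral_mono) auto
  then show ?thesis
    using sets_eq_imp_space_eq[OF S(1)] by (simp add: mult.commute)
qed

lemma integrable_potential:
  assumes "sets R = sets borel" "finite_measure R" "sets S = sets borel" "finite_measure S"
  shows "integrable R (potential S)"
  using assms
  by (intro integrable_bounded[OF assms(2) borel_measurable_sets_borel abs_potential_le]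
      borel_measurable_potential)

lemma energyK_eq_cross_energy:
  assumes R: "sets R = sets borel" "finite_measure R"
  shows "energyK c R = cross_energy R R"
proof -
  interpret finite_measure R by fact
  interpret pair_sigma_finite R R ..
  have "integrable (R \<Otimes>\<^sub>M R) (\<lambda>(x, y). c x y)"
    by (rule integrable_bounded[OF finite_measure_pair_measure[OF R(2) R(2)] measurable_kernel_on[OF R(1) R(1)],
          where B=B]) (auto simp: abs_kernel_le)
  then show ?thesis
    unfolding energyK_def cross_energy_def potential_def by (rule integral_fst[symmetric])
qed

lemma cross_energy_weighted_sum_left:
  fixes M :: "'i \<Rightarrow> 'a measure"
  assumes M: "\<And>i. i \<in> I \<Longrightarrow> sets (M i) = sets borel" "\<And>i. i \<in> I \<Longrightarrow> finite_measure (M i)"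
    and fin: "finite I" and w: "\<And>i. i \<in> I \<Longrightarrow> 0 \<le> w i"
    and S: "sets S = sets borel" "finite_measure S"
  shows "cross_energy (weighted_sum_measure I w M) S = (\<Sum>i\<in>I. w i * cross_energy (M i) S)"
  unfolding cross_energy_def
  by (rule integral_weighted_sum_measure[OF M fin w borel_measurable_potential[OF S] abs_potential_le[OF S]])

lemma cross_energy_weighted_sum_right:
  fixes M :: "'i \<Rightarrow> 'a measure"
  assumes M: "\<And>i. i \<in> I \<Longrightarrow> sets (M i) = sets borel" "\<And>i. i \<in> I \<Longrightarrow> finite_measure (M i)"
    and fin: "finite I" and w: "\<And>i. i \<in> I \<Longrightarrow> 0 \<le> w i"
    and R: "sets R = sets borel" "finite_measure R"
  shows "cross_energy R (weighted_sum_measure I w M) = (\<Sum>i\<in>I. w i * cross_energy R (M i))"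
proof -
  have "potential (weighted_sum_measure I w M) = (\<lambda>x. \<Sum>i\<in>I. w i * potential (M i) x)"
    unfolding potential_def
    by (intro ext integral_weighted_sum_measure[OF M fin w measurable_kernel_right abs_kernel_le])
  then have "cross_energy R (weighted_sum_measure I w M) = (\<Sum>i\<in>I. (\<integral>x. w i * potential (M i) x \<partial>R))"
    unfolding cross_energy_def
    by (simp add: Bochner_Integration.integral_sum integrable_potential[OF R M])
  then show ?thesis
    by (simp add: cross_energy_def)
qed

lemma energyK_mix_measure:
  assumes P: "sets P = sets borel" "finite_measure P" and Q: "sets Q = sets borel" "finite_measure Q"
    and t: "0 \<le> t" "t \<le> 1"
  shows "energyK c (mix_measure t P Q)
    = t * energyK c P + (1 - t) * energyK c Q - t * (1 - t) * energy_of_difference 1 P 1 Q"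
proof -
  let ?w = "\<lambda>b. if b then t else 1 - t" and ?M = "\<lambda>b. if b then P else Q"
  let ?W = "weighted_sum_measure {True, False} ?w ?M"
  have M: "sets (?M b) = sets borel" "finite_measure (?M b)" for b
    using P Q by auto
  have w: "0 \<le> ?w b" for b
    using t by auto
  have W: "sets ?W = sets borel" "finite_measure ?W"
    by (simp_all add: finite_measure_weighted_sum_measure M)
  have "mix_measure t P Q = ?W"
    by (simp add: mix_measure_def weighted_sum_measure_def)
  then have "energyK c (mix_measure t P Q) = cross_energy ?W ?W"
    by (simp add: energyK_eq_cross_energy[OF W])
  also have "\<dots> = t * cross_energy P ?W + (1 - t) * cross_energy Q ?W"
    by (subst cross_energy_weighted_sum_left[OF M _ w W]) simp_all
  also have "\<dots> = t * (t * cross_energy P P + (1 - t) * cross_energy P Q)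
      + (1 - t) * (t * cross_energy Q P + (1 - t) * cross_energy Q Q)"
    by (subst (1 2) cross_energy_weighted_sum_right[OF M _ w]) (simp_all add: P Q)
  finally show ?thesis
    by (simp add: energyK_eq_cross_energy P Q energy_of_difference_def power2_eq_square algebra_simps)
qed

lemma convex_on_measures_iff_energy_of_difference_nonneg:
  assumes S: "\<And>R. R \<in> S \<Longrightarrow> sets R = sets borel \<and> finite_measure R"
  shows "convex_on_measures S (energyK c) \<longleftrightarrow> (\<forall>P\<in>S. \<forall>Q\<in>S. 0 \<le> energy_of_difference 1 P 1 Q)"
proof
  assume convex: "convex_on_measures S (energyK c)"
  show "\<forall>P\<in>S. \<forall>Q\<in>S. 0 \<le> energy_of_difference 1 P 1 Q"
  proof (intro ballI)
    fix P Q
    assume "P \<in> S" "Q \<in> S"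
    moreover have "0 \<le> (1/2 :: real) \<and> (1/2 :: real) \<le> 1"
      by simp
    ultimately have "energyK c (mix_measure (1/2) P Q) \<le> 1/2 * energyK c P + (1 - 1/2) * energyK c Q"
      using convex unfolding convex_on_measures_def by blast
    then show "0 \<le> energy_of_difference 1 P 1 Q"
      using S \<open>P \<in> S\<close> \<open>Q \<in> S\<close> by (simp add: energyK_mix_measure)
  qed
next
  assume "\<forall>P\<in>S. \<forall>Q\<in>S. 0 \<le> energy_of_difference 1 P 1 Q"
  then show "convex_on_measures S (energyK c)"
    using S by (auto simp: convex_on_measures_def energyK_mix_measure)
qed

lemma cross_energy_return: "cross_energy (return borel x) (return borel y) = c x y"
proof -
  have "potential (return borel y) = (\<lambda>x. c x y)"
    unfolding potential_def by (intro ext integral_return) (simp_all add: measurable_kernel_right)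
  then show ?thesis
    unfolding cross_energy_def by (simp add: integral_return measurable_kernel_left)
qed

lemma cross_energy_discrete_measure:
  assumes p: "\<And>i. 0 \<le> p i" and q: "\<And>i. 0 \<le> q i"
  shows "cross_energy (discrete_measure xs p) (discrete_measure xs q)
    = (\<Sum>i<length xs. \<Sum>j<length xs. p i * q j * c (xs ! i) (xs ! j))"
proof -
  have return: "sets (return borel (xs ! i)) = sets borel" "finite_measure (return borel (xs ! i))" for i
    by (simp_all add: prob_space_return prob_space.finite_measure)
  have "cross_energy (discrete_measure xs p) (discrete_measure xs q)
      = (\<Sum>i<length xs. p i * cross_energy (return borel (xs ! i)) (discrete_measure xs q))"
    unfolding discrete_measure_def[of xs p]
    by (rule cross_energy_weighted_sum_left)
      (simp_all add: return p discrete_measure_def[symmetric] finite_measure_discrete_measure)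
  also have "\<dots> = (\<Sum>i<length xs. p i * (\<Sum>j<length xs. q j * c (xs ! i) (xs ! j)))"
    unfolding discrete_measure_def[of xs q]
    by (simp add: cross_energy_weighted_sum_right return q cross_energy_return)
  finally show ?thesis
    by (simp add: sum_distrib_left mult_ac)
qed

lemma energy_of_difference_discrete_measure:
  assumes "\<And>i. 0 \<le> p i" "\<And>i. 0 \<le> q i"
  shows "energy_of_difference 1 (discrete_measure xs p) 1 (discrete_measure xs q)
    = kernel_quadratic_form c xs (\<lambda>i. p i - q i)"
proof -
  have "kernel_quadratic_form c xs (\<lambda>i. p i - q i)
      = (\<Sum>i<length xs. \<Sum>j<length xs. p i * p j * c (xs ! i) (xs ! j) - p i * q j * c (xs ! i) (xs ! j)
           - q i * p j * c (xs ! i) (xs ! j) + q i * q j * c (xs ! i) (xs ! j))"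
    unfolding kernel_quadratic_form_def by (intro sum.cong refl) (simp add: algebra_simps)
  then show ?thesis
    using assms by (simp add: energy_of_difference_def cross_energy_discrete_measure sum.distrib sum_subtractf)
qed

lemma discrete_measure_in_finite_borel_measures: "discrete_measure xs w \<in> finite_borel_measures"
  by (simp add: finite_borel_measures_def finite_measure_discrete_measure)

lemma pos_def_kernel_if_energy_of_difference_nonneg:
  assumes "\<forall>P\<in>finite_borel_measures. \<forall>Q\<in>finite_borel_measures. 0 \<le> energy_of_difference 1 P 1 Q"
  shows "pos_def_kernel c"
  unfolding pos_def_kernel_def kernel_quadratic_form_def[symmetric]
proof (intro allI impI)
  fix xs :: "'a list" and a :: "nat \<Rightarrow> real"
  let ?p = "\<lambda>i. max (a i) 0" and ?q = "\<lambda>i. max (- a i) 0"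
  have "(\<lambda>i. ?p i - ?q i) = a"
    by (auto simp: max_def)
  moreover have "0 \<le> energy_of_difference 1 (discrete_measure xs ?p) 1 (discrete_measure xs ?q)"
    using assms discrete_measure_in_finite_borel_measures by blast
  ultimately show "0 \<le> kernel_quadratic_form c xs a"
    by (simp add: energy_of_difference_discrete_measure)
qed

lemma balanced_pos_def_kernel_if_energy_of_difference_nonneg:
  assumes "\<forall>P\<in>borel_prob_measures. \<forall>Q\<in>borel_prob_measures. 0 \<le> energy_of_difference 1 P 1 Q"
  shows "balanced_pos_def_kernel c"
  unfolding balanced_pos_def_kernel_def kernel_quadratic_form_def[symmetric]
proof (intro allI impI)
  fix xs :: "'a list" and a :: "nat \<Rightarrow> real"
  assume sum_a: "(\<Sum>i<length xs. a i) = 0"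
  let ?p = "\<lambda>i. max (a i) 0" and ?q = "\<lambda>i. max (- a i) 0"
  define s where "s = (\<Sum>i<length xs. ?p i)"
  have sum_q: "(\<Sum>i<length xs. ?q i) = s"
    using sum_negative_part_eq_sum_positive_part[OF sum_a] by (simp add: s_def)
  have "0 \<le> s"
    unfolding s_def by (intro sum_nonneg) simp
  then consider "s = 0" | "0 < s"
    by linarith
  then show "0 \<le> kernel_quadratic_form c xs a"
  proof cases
    case 1
    then have "a i = 0" if "i < length xs" for i
      using zero_if_sum_positive_part_eq_0[OF sum_a _ that] by (simp add: s_def)
    then show ?thesis
      by (simp add: kernel_quadratic_form_def)
  next
    case 2
    have "discrete_measure xs (\<lambda>i. ?p i / s) \<in> borel_prob_measures"
      "discrete_measure xs (\<lambda>i. ?q i / s) \<in> borel_prob_measures"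
      using 2 sum_q unfolding borel_prob_measures_def
      by (auto intro!: prob_space_discrete_measure simp: s_def sum_divide_distrib[symmetric])
    then have "0 \<le> energy_of_difference 1 (discrete_measure xs (\<lambda>i. ?p i / s)) 1 (discrete_measure xs (\<lambda>i. ?q i / s))"
      using assms by blast
    also have "\<dots> = kernel_quadratic_form c xs (\<lambda>i. (1 / s) * a i)"
    proof -
      have "(\<lambda>i. ?p i / s - ?q i / s) = (\<lambda>i. (1 / s) * a i)"
        by (auto simp: max_def diff_divide_distrib[symmetric])
      then show ?thesis
        using 2 by (simp add: energy_of_difference_discrete_measure)
    qed
    also have "\<dots> = (1 / s)\<^sup>2 * kernel_quadratic_form c xs a"
      by (rule kernel_quadratic_form_scale)
    finally show ?thesis
      using 2 by (simp add: zero_le_mult_iff)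
  qed
qed

lemma integral_PiM_kernel_quadratic_form:
  fixes M :: "'i \<Rightarrow> 'a measure" and a :: "'i \<Rightarrow> real"
  assumes M: "\<And>i. prob_space (M i)" "\<And>i. sets (M i) = sets borel" and fin: "finite I"
  shows "(\<integral>\<omega>. (\<Sum>i\<in>I. \<Sum>j\<in>I. c (\<omega> i) (\<omega> j) * a i * a j) \<partial>PiM I M)
    = (\<Sum>i\<in>I. \<Sum>j\<in>I. a i * a j * cross_energy (M i) (M j))
      + (\<Sum>i\<in>I. (a i)\<^sup>2 * (diagonal_energy (M i) - cross_energy (M i) (M i)))"
proof -
  have "finite_measure (PiM I M)"
    using prob_space_PiM[of I M] M(1) by (simp add: prob_space.finite_measure)
  then have int: "integrable (PiM I M) (\<lambda>\<omega>. c (\<omega> i) (\<omega> j))" if "i \<in> I" "j \<in> I" for i j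
    by (rule integrable_bounded[OF _ measurable_PiM_apply_pair[OF M(2) that measurable_kernel] abs_kernel_le])
  have pair: "(\<integral>\<omega>. c (\<omega> i) (\<omega> j) \<partial>PiM I M) = cross_energy (M i) (M j)
      + (if i = j then diagonal_energy (M i) - cross_energy (M i) (M i) else 0)"
    if "i \<in> I" "j \<in> I" for i j
  proof (cases "i = j")
    case True
    then show ?thesis
      using integral_PiM_diagonal[OF M that(2) measurable_kernel] by (simp add: diagonal_energy_def)
  next
    case False
    then show ?thesis
      using integral_PiM_pair[of M, OF M fin that False measurable_kernel abs_kernel_le]
      by (simp add: cross_energy_def potential_def[abs_def])
  qed
  have "(\<integral>\<omega>. (\<Sum>i\<in>I. \<Sum>j\<in>I. c (\<omega> i) (\<omega> j) * a i * a j) \<partial>PiM I M)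
      = (\<Sum>i\<in>I. \<Sum>j\<in>I. (\<integral>\<omega>. c (\<omega> i) (\<omega> j) * a i * a j \<partial>PiM I M))"
    using int by (simp add: Bochner_Integration.integral_sum Bochner_Integration.integrable_sum)
  also have "\<dots> = (\<Sum>i\<in>I. \<Sum>j\<in>I. a i * a j * cross_energy (M i) (M j)
      + (if i = j then (a i)\<^sup>2 * (diagonal_energy (M i) - cross_energy (M i) (M i)) else 0))"
    by (intro sum.cong refl) (simp add: pair power2_eq_square algebra_simps)
  also have "\<dots> = (\<Sum>i\<in>I. \<Sum>j\<in>I. a i * a j * cross_energy (M i) (M j))
      + (\<Sum>i\<in>I. (a i)\<^sup>2 * (diagonal_energy (M i) - cross_energy (M i) (M i)))"
    using fin by (simp add: sum.distrib)
  finally show ?thesis .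
qed

lemma integral_PiM_two_blocks:
  fixes n :: nat and \<alpha> \<beta> :: real
  assumes P: "prob_space P" "sets P = sets borel" and Q: "prob_space Q" "sets Q = sets borel"
  defines "M \<equiv> \<lambda>i. if i < n then P else Q" and "a \<equiv> \<lambda>i. if i < n then \<alpha> else - \<beta>"
  shows "(\<integral>\<omega>. (\<Sum>i<2 * n. \<Sum>j<2 * n. c (\<omega> i) (\<omega> j) * a i * a j) \<partial>PiM {..<2 * n} M)
    = (real n)\<^sup>2 * energy_of_difference \<alpha> P \<beta> Q
      + real n * (\<alpha>\<^sup>2 * (diagonal_energy P - cross_energy P P) + \<beta>\<^sup>2 * (diagonal_energy Q - cross_energy Q Q))"
proof -
  have "prob_space (M i)" "sets (M i) = sets borel" for i
    using P Q by (simp_all add: M_def)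
  then have "(\<integral>\<omega>. (\<Sum>i<2 * n. \<Sum>j<2 * n. c (\<omega> i) (\<omega> j) * a i * a j) \<partial>PiM {..<2 * n} M)
      = (\<Sum>i<2 * n. \<Sum>j<2 * n. a i * a j * cross_energy (M i) (M j))
        + (\<Sum>i<2 * n. (a i)\<^sup>2 * (diagonal_energy (M i) - cross_energy (M i) (M i)))"
    by (rule integral_PiM_kernel_quadratic_form) simp
  also have "\<dots> = (real n)\<^sup>2 * energy_of_difference \<alpha> P \<beta> Q
      + real n * (\<alpha>\<^sup>2 * (diagonal_energy P - cross_energy P P) + \<beta>\<^sup>2 * (diagonal_energy Q - cross_energy Q Q))"
    unfolding mult_2 sum_lessThan_add
    by (simp add: M_def a_def energy_of_difference_def power2_eq_square algebra_simps)
  finally show ?thesis .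
qed

lemma energy_of_difference_nonneg:
  assumes P: "prob_space P" "sets P = sets borel" and Q: "prob_space Q" "sets Q = sets borel"
    and form_nonneg: "\<And>n xs. 0 < n \<Longrightarrow> length xs = 2 * n \<Longrightarrow>
      0 \<le> kernel_quadratic_form c xs (\<lambda>i. if i < n then \<alpha> else - \<beta>)"
  shows "0 \<le> energy_of_difference \<alpha> P \<beta> Q"
proof (rule nonneg_of_quadratic_growth)
  fix n :: nat
  assume n: "0 < n"
  let ?M = "\<lambda>i. if i < n then P else Q" and ?a = "\<lambda>i. if i < n then \<alpha> else - \<beta>"
  have "0 \<le> (\<integral>\<omega>. (\<Sum>i<2 * n. \<Sum>j<2 * n. c (\<omega> i) (\<omega> j) * ?a i * ?a j) \<partial>PiM {..<2 * n} ?M)"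
  proof (rule Bochner_Integration.integral_nonneg)
    fix \<omega>
    have "0 \<le> kernel_quadratic_form c (map \<omega> [0..<2 * n]) ?a"
      using n by (intro form_nonneg) simp_all
    then show "0 \<le> (\<Sum>i<2 * n. \<Sum>j<2 * n. c (\<omega> i) (\<omega> j) * ?a i * ?a j)"
      by (simp add: kernel_quadratic_form_def)
  qed
  then show "0 \<le> real n * real n * energy_of_difference \<alpha> P \<beta> Q
      + real n * (\<alpha>\<^sup>2 * (diagonal_energy P - cross_energy P P) + \<beta>\<^sup>2 * (diagonal_energy Q - cross_energy Q Q))"
    by (simp add: integral_PiM_two_blocks[OF P Q] power2_eq_square)
qed

lemma cross_energy_scaled:
  assumes "0 \<le> r" "sets R = sets borel" "finite_measure R" "sets S = sets borel" "finite_measure S"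
  shows "cross_energy (weighted_sum_measure {()} (\<lambda>_. r) (\<lambda>_. R)) S = r * cross_energy R S"
    "cross_energy S (weighted_sum_measure {()} (\<lambda>_. r) (\<lambda>_. R)) = r * cross_energy S R"
  using cross_energy_weighted_sum_left[of "{()}" "\<lambda>_. R" "\<lambda>_. r" S]
    cross_energy_weighted_sum_right[of "{()}" "\<lambda>_. R" "\<lambda>_. r" S] assms
  by simp_all

lemma energy_of_difference_nonneg_if_pos_def_kernel:
  assumes pd: "pos_def_kernel c" and P: "P \<in> finite_borel_measures" and Q: "Q \<in> finite_borel_measures"
  shows "0 \<le> energy_of_difference 1 P 1 Q"
proof -
  have "sets P = sets borel" "finite_measure P" "sets Q = sets borel" "finite_measure Q"
    using P Q by (simp_all add: finite_borel_measures_def)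
  obtain P' p where P': "prob_space P'" "sets P' = sets borel" "0 \<le> p"
    and P_eq: "P = weighted_sum_measure {()} (\<lambda>_. p) (\<lambda>_. P')"
    using \<open>sets P = sets borel\<close> \<open>finite_measure P\<close> by (rule finite_measure_scaled_prob_space)
  obtain Q' q where Q': "prob_space Q'" "sets Q' = sets borel" "0 \<le> q"
    and Q_eq: "Q = weighted_sum_measure {()} (\<lambda>_. q) (\<lambda>_. Q')"
    using \<open>sets Q = sets borel\<close> \<open>finite_measure Q\<close> by (rule finite_measure_scaled_prob_space)
  have finite: "finite_measure P'" "finite_measure Q'"
    using P' Q' by (simp_all add: prob_space.finite_measure)
  have finite_scaled: "finite_measure (weighted_sum_measure {()} (\<lambda>_. r) (\<lambda>_. R))"
    if "sets R = sets borel" "finite_measure R" for r R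
    using that by (intro finite_measure_weighted_sum_measure) simp_all
  have "energy_of_difference 1 P 1 Q = energy_of_difference p P' q Q'"
    unfolding energy_of_difference_def P_eq Q_eq
    using P' Q' by (simp add: cross_energy_scaled finite finite_scaled power2_eq_square algebra_simps)
  also have "0 \<le> \<dots>"
    using P' Q' pos_def_kernel_quadratic_form_nonneg[OF pd] by (intro energy_of_difference_nonneg)
  finally show ?thesis .
qed

lemma energy_of_difference_nonneg_if_balanced_pos_def_kernel:
  assumes bpd: "balanced_pos_def_kernel c" and P: "P \<in> borel_prob_measures" and Q: "Q \<in> borel_prob_measures"
  shows "0 \<le> energy_of_difference 1 P 1 Q"
proof (rule energy_of_difference_nonneg)
  fix n :: nat and xs :: "'a list"
  assume "length xs = 2 * n"
  then have "(\<Sum>i<length xs. if i < n then 1 else - 1 :: real) = 0"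
    by (simp add: mult_2 sum_lessThan_add)
  then show "0 \<le> kernel_quadratic_form c xs (\<lambda>i. if i < n then 1 else - 1)"
    by (rule balanced_pos_def_kernel_quadratic_form_nonneg[OF bpd])
qed (use P Q in \<open>simp_all add: borel_prob_measures_def\<close>)

lemma pos_def_kernel_iff_energy_of_difference_nonneg:
  "pos_def_kernel c \<longleftrightarrow>
    (\<forall>P\<in>finite_borel_measures. \<forall>Q\<in>finite_borel_measures. 0 \<le> energy_of_difference 1 P 1 Q)"
  using energy_of_difference_nonneg_if_pos_def_kernel pos_def_kernel_if_energy_of_difference_nonneg
  by blast

lemma balanced_pos_def_kernel_iff_energy_of_difference_nonneg:
  "balanced_pos_def_kernel c \<longleftrightarrow>
    (\<forall>P\<in>borel_prob_measures. \<forall>Q\<in>borel_prob_measures. 0 \<le> energy_of_difference 1 P 1 Q)"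
  using energy_of_difference_nonneg_if_balanced_pos_def_kernel
    balanced_pos_def_kernel_if_energy_of_difference_nonneg by blast

end

theorem lemma3p3:
  fixes c :: "'a::polish_space \<Rightarrow> 'a \<Rightarrow> real"
  assumes cont: "continuous_on UNIV (\<lambda>(x, y). c x y)"
    and bdd: "bounded (range (\<lambda>(x, y). c x y))"
    and nonneg: "\<And>x y. 0 \<le> c x y"
    and sym: "\<And>x y. c x y = c y x"
  shows "(pos_def_kernel c \<longleftrightarrow> convex_on_measures finite_borel_measures (energyK c))
    \<and> (balanced_pos_def_kernel c \<longleftrightarrow> convex_on_measures borel_prob_measures (energyK c))"
proof -
  obtain B where "\<And>z. z \<in> range (\<lambda>(x, y). c x y) \<Longrightarrow> norm z \<le> B"
    using bdd unfolding bounded_iff by blast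
  then have "\<bar>c x y\<bar> \<le> B" for x y
    by (metis (mono_tags) case_prod_conv rangeI real_norm_def)
  moreover have "(\<lambda>(x, y). c x y) \<in> borel_measurable (borel \<Otimes>\<^sub>M borel)"
    unfolding borel_prod by (rule borel_measurable_continuous_onI[OF cont])
  ultimately interpret bounded_kernel c B
    by unfold_locales
  have finite: "sets R = sets borel \<and> finite_measure R" if "R \<in> finite_borel_measures" for R
    using that by (simp add: finite_borel_measures_def)
  have prob: "sets R = sets borel \<and> finite_measure R" if "R \<in> borel_prob_measures" for R
    using that by (simp add: borel_prob_measures_def prob_space.finite_measure)
  show ?thesis
    using convex_on_measures_iff_energy_of_difference_nonneg[OF finite]
      convex_on_measures_iff_energy_of_difference_nonneg[OF prob]
    by (simp add: pos_def_kernel_iff_energy_of_difference_nonneg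
        balanced_pos_def_kernel_iff_energy_of_difference_nonneg)
qed

end
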